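(* Let $\mathbf x,\mathbf y$ be two different instances. If $P(\mathbf y\in I(\mathbf x))<1$, then $P(I(\mathbf x)\cap I(\mathbf y)=\emptyset)=1$, meaning: for every instance $\mathbf w$, $P(\mathbf w\in I(\mathbf x)\cap I(\mathbf y))=0$. Moreover, $$P(\mathbf y\in I(\mathbf x))=1\iff P(I(\mathbf x)=I(\mathbf y))=1,$$ where $P(I(\mathbf x)=I(\mathbf y))=1$ means: for every instance $\mathbf w$, $P(\mathbf w\in I(\mathbf x))=1$ if and only if $P(\mathbf w\in I(\mathbf y))=1$.
   Context: Setting: $n$ instances with covariates in $\mathbb R^d$ form the dataset $\mathcal D=\mathcal D_n$; a forest of $K$ axis-aligned causal trees is built on $\mathcal D$, the trees being independent given $\mathcal D$. $L_k(\mathbf u)$ is the leaf of tree $k$ containing $\mathbf u$ (each point lies in exactly one leaf of each tree). For instances $\mathbf u,\mathbf v$, $P(\mathbf u\in L(\mathbf v))$ denotes $P(\mathbf u\in L_k(\mathbf v)\mid\mathcal D)$ (same for all $k$), the events $\{\mathbf u\in L_k(\mathbf v)\}$, $k=1,\dots,K$, are independent given $\mathcal D$, and $\lim_{n\to\infty}P(\mathbf u\in L(\mathbf v))$ is assumed to exist for all pairs. LILI with $K$ trees: $\mathbf u\in I(\mathbf v,\Theta_K)$ iff the number of $k\le K$ with $\mathbf u\in L_k(\mathbf v)$ exceeds $K-\sqrt K$. All probabilities of events involving $I(\cdot)$ are conditional on $\mathcal D$ and defined as $\lim_{K\to\infty}\lim_{n\to\infty}$ of the corresponding probabilities with $I(\cdot,\Theta_K)$,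 e.g. $P(\mathbf u\in I(\mathbf v)):=\lim_{K}\lim_{n}P(\mathbf u\in I(\mathbf v,\Theta_K)\mid\mathcal D_n)$ and $P(\mathbf w\in I(\mathbf x)\cap I(\mathbf y)):=\lim_K\lim_nP(\mathbf w\in I(\mathbf x,\Theta_K)\cap I(\mathbf y,\Theta_K)\mid\mathcal D_n)$. *)

theory Defs
  imports "HOL-Probability.Probability"
begin

text \<open>For each dataset size n, Omega n is the probability space of the
tree randomness given the dataset D_n (so all probabilities are conditional on D_n).
L n k om v is the leaf of tree k (of the forest built on D_n, outcome om) containing v.\<close>

text \<open>The LILI event  u in I(v, Theta_K): more than K - sqrt K of the first K trees
put u into the leaf of v.\<close>
definition lili_event ::
  "'o measure \<Rightarrow> (nat \<Rightarrow> 'o \<Rightarrow> 'a \<Rightarrow> 'a set) \<Rightarrow> nat \<Rightarrow> 'a \<Rightarrow> 'a \<Rightarrow> 'o set" where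
  "lili_event M Lf K u v =
     {om \<in> space M. real (card {k \<in> {..<K}. u \<in> Lf k om v}) > real K - sqrt (real K)}"

definition prob_I ::
  "(nat \<Rightarrow> 'o measure) \<Rightarrow> (nat \<Rightarrow> nat \<Rightarrow> 'o \<Rightarrow> 'a \<Rightarrow> 'a set) \<Rightarrow> 'a \<Rightarrow> 'a \<Rightarrow> real" where
  "prob_I Om L u v =
     lim (\<lambda>K. lim (\<lambda>n. measure (Om n) (lili_event (Om n) (L n) K u v)))"

text \<open>P(w in I(x) \<inter> I(y)) = c, as the iterated limit lim_K lim_n; since the inner limit
need not exist a priori, we require that both lim_K limsup_n and lim_K liminf_n equal c
(this coincides with lim_K lim_n = c whenever the inner limits exist).\<close>
definition prob_I_inter_is ::
  "(nat \<Rightarrow> 'o measure) \<Rightarrow> (nat \<Rightarrow> nat \<Rightarrow> 'o \<Rightarrow> 'a \<Rightarrow> 'a set) \<Rightarrow> 'a \<Rightarrow> 'a \<Rightarrow> 'a \<Rightarrow> real \<Rightarrow> bool" where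
  "prob_I_inter_is Om L w x y c \<longleftrightarrow>
     ((\<lambda>K. limsup (\<lambda>n. ereal (measure (Om n)
          (lili_event (Om n) (L n) K w x \<inter> lili_event (Om n) (L n) K w y)))) \<longlonglongrightarrow> ereal c) \<and>
     ((\<lambda>K. liminf (\<lambda>n. ereal (measure (Om n)
          (lili_event (Om n) (L n) K w x \<inter> lili_event (Om n) (L n) K w y)))) \<longlonglongrightarrow> ereal c)"

end

theory Submission
  imports Defs "HOL-Real_Asymp.Real_Asymp"
begin

(* Given the data, the number of the first K trees that put u into the leaf of v is binomial with
   parameters K and p_n = P(u in L(v)). So P(u in I(v, Theta_K)) is a polynomial in p_n, and its limit
   in n is the binomial tail beyond K - sqrt K at p = lim p_n. For c > 0 the tail beyond K - c sqrt K
   tends to 1 if p = 1 and to 0 if p < 1: at most (c sqrt K + 1) K^(c sqrt K) sets of trees are that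
   large, each of probability at most p^(K - c sqrt K). Hence P(u in I(v)) is 1 or 0.
   If w is in I(x, Theta_K) and in I(y, Theta_K), more than K - 2 sqrt K trees put w into the leaves
   of both x and y; these leaves coincide, so those trees put y into the leaf of x, an event whose
   probability vanishes in the limit when P(y in L(x)) < 1. The equivalence follows from
   P(A \<inter> B) \<ge> P(A) + P(B) - 1 applied to single-tree leaf events. *)

lemma count_hits_eq_UN:
  fixes K :: nat
  shows "{\<omega>\<in>\<Omega>. P (card {k\<in>{..<K}. \<omega> \<in> A k})} =
   (\<Union>S\<in>{S. S \<subseteq> {..<K} \<and> P (card S)}. {\<omega>\<in>\<Omega>. {k\<in>{..<K}. \<omega> \<in> A k} = S})"
  by auto

lemma hit_pattern_eq_Inter:
  fixes K :: nat
  assumes "S \<subseteq> {..<K}" and "K \<noteq> 0" and "\<And>k. A k \<subseteq> \<Omega>"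
  shows "{\<omega>\<in>\<Omega>. {k\<in>{..<K}. \<omega> \<in> A k} = S} = (\<Inter>k<K. if k \<in> S then A k else \<Omega> - A k)"
proof (intro set_eqI iffI)
  fix \<omega> assume \<omega>: "\<omega> \<in> (\<Inter>k<K. if k \<in> S then A k else \<Omega> - A k)"
  have "0 \<in> {..<K}"
    using assms(2) by simp
  with \<omega> have "\<omega> \<in> (if 0 \<in> S then A 0 else \<Omega> - A 0)"
    by (rule INT_D)
  with \<omega> show "\<omega> \<in> {\<omega>\<in>\<Omega>. {k\<in>{..<K}. \<omega> \<in> A k} = S}"
    using assms(1,3) by (auto split: if_splits)
qed (auto split: if_splits)

lemma (in prob_space) hit_pattern_in_events:
  fixes K :: nat
  assumes "\<And>k. A k \<in> events" and "S \<subseteq> {..<K}"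
  shows "{\<omega>\<in>space M. {k\<in>{..<K}. \<omega> \<in> A k} = S} \<in> events"
proof -
  have "{\<omega>\<in>space M. {k\<in>{..<K}. \<omega> \<in> A k} = S}
      = {\<omega>\<in>space M. \<forall>k\<in>{..<K}. \<omega> \<in> A k \<longleftrightarrow> k \<in> S}"
    using assms(2) by auto
  also have "\<dots> \<in> events"
  proof (intro sets.sets_Collect_finite_All)
    show "{\<omega>\<in>space M. \<omega> \<in> A k \<longleftrightarrow> k \<in> S} \<in> events" for k
      using assms(1) by (cases "k \<in> S") (auto simp: Collect_neg_eq Diff_eq[symmetric])
  qed simp
  finally show ?thesis .
qed

lemma (in prob_space) count_hits_in_events:
  fixes K :: nat
  assumes "\<And>k. A k \<in> events"
  shows "{\<omega>\<in>space M. P (card {k\<in>{..<K}. \<omega> \<in> A k})} \<in> events"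
  unfolding count_hits_eq_UN using assms by (intro sets.finite_UN ballI hit_pattern_in_events) auto

lemma (in prob_space) prob_hit_pattern:
  assumes ev: "\<And>k. A k \<in> events" and ind: "indep_events A UNIV" and pr: "\<And>k. prob (A k) = q"
    and S: "S \<subseteq> {..<K}"
  shows "prob {\<omega>\<in>space M. {k\<in>{..<K}. \<omega> \<in> A k} = S} = q ^ card S * (1 - q) ^ (K - card S)"
proof (cases "K = 0")
  case True
  with S show ?thesis by (simp add: prob_space)
next
  case False
  define B where "B k = (if k \<in> S then A k else space M - A k)" for k
  have pattern_eq: "{\<omega>\<in>space M. {k\<in>{..<K}. \<omega> \<in> A k} = S} = (\<Inter>k<K. B k)"
    unfolding B_def using S False ev[THEN sets.sets_into_space] by (rule hit_pattern_eq_Inter)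
  have "indep_sets (\<lambda>k. sigma_sets (space M) {A k}) UNIV"
    using ind unfolding indep_events_def_alt by (intro indep_sets_sigma) (auto simp: Int_stable_def)
  then have "prob (\<Inter>k<K. B k) = (\<Prod>k<K. prob (B k))"
    using False by (intro indep_setsD) (auto simp: B_def intro: sigma_sets.Compl)
  also have "\<dots> = (\<Prod>k<K. if k \<in> S then q else 1 - q)"
    by (intro prod.cong) (auto simp: B_def pr prob_compl ev)
  also have "\<dots> = q ^ card S * (1 - q) ^ (K - card S)"
    using S by (simp add: prod.If_cases Int_absorb1 Diff_eq[symmetric] card_Diff_subset finite_subset)
  finally show ?thesis
    unfolding pattern_eq .
qed

lemma (in prob_space) prob_count_hits:
  fixes K :: nat
  assumes ev: "\<And>k. A k \<in> events" and ind: "indep_events A UNIV" and pr: "\<And>k. prob (A k) = q"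
  shows "prob {\<omega>\<in>space M. P (card {k\<in>{..<K}. \<omega> \<in> A k})} =
         (\<Sum>S | S \<subseteq> {..<K} \<and> P (card S). q ^ card S * (1 - q) ^ (K - card S))"
proof -
  let ?E = "\<lambda>S. {\<omega>\<in>space M. {k\<in>{..<K}. \<omega> \<in> A k} = S}"
  have "prob (\<Union>S\<in>{S. S \<subseteq> {..<K} \<and> P (card S)}. ?E S)
      = (\<Sum>S | S \<subseteq> {..<K} \<and> P (card S). prob (?E S))"
    by (intro finite_measure_finite_Union image_subsetI hit_pattern_in_events ev)
      (auto simp: disjoint_family_on_def)
  also have "\<dots> = (\<Sum>S | S \<subseteq> {..<K} \<and> P (card S). q ^ card S * (1 - q) ^ (K - card S))"
    by (intro sum.cong refl prob_hit_pattern[OF ev ind pr]) simp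
  finally show ?thesis
    unfolding count_hits_eq_UN .
qed

definition binomial_tail :: "nat \<Rightarrow> real \<Rightarrow> real \<Rightarrow> real" where
  "binomial_tail K t q =
     (\<Sum>S | S \<subseteq> {..<K} \<and> t < real (card S). q ^ card S * (1 - q) ^ (K - card S))"

lemma tendsto_binomial_tail [tendsto_intros]:
  "(f \<longlongrightarrow> q) F \<Longrightarrow> ((\<lambda>x. binomial_tail K t (f x)) \<longlongrightarrow> binomial_tail K t q) F"
  unfolding binomial_tail_def by (intro tendsto_intros)

lemma binomial_tail_nonneg: "0 \<le> q \<Longrightarrow> q \<le> 1 \<Longrightarrow> 0 \<le> binomial_tail K t q"
  unfolding binomial_tail_def by (intro sum_nonneg) auto

lemma binomial_tail_one:
  assumes "t < real K"
  shows "binomial_tail K t 1 = 1"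
proof -
  have "binomial_tail K t 1 = (\<Sum>S | S \<subseteq> {..<K} \<and> t < real (card S). if S = {..<K} then 1 else 0)"
    unfolding binomial_tail_def
  proof (intro sum.cong refl)
    fix S assume "S \<in> {S. S \<subseteq> {..<K} \<and> t < real (card S)}"
    then have "S \<subseteq> {..<K}" by simp
    then have "K - card S = 0 \<longleftrightarrow> S = {..<K}"
      using card_subset_eq[of "{..<K}" S] card_mono[of "{..<K}" S] by auto
    then show "1 ^ card S * (1 - 1) ^ (K - card S) = (if S = {..<K} then 1 else (0::real))"
      by auto
  qed
  also have "\<dots> = 1"
    using assms by (subst sum.delta) auto
  finally show ?thesis .
qed

lemma binomial_tail_le_powr:
  assumes "0 \<le> q" "q \<le> 1" "0 \<le> t"
  shows "binomial_tail K t q \<le> card {S. S \<subseteq> {..<K} \<and> t < real (card S)} * q powr t"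
proof -
  have term_le: "q ^ card S * (1 - q) ^ (K - card S) \<le> q powr t"
    if "t < real (card S)" for S :: "nat set"
  proof -
    have "q ^ card S * (1 - q) ^ (K - card S) \<le> q ^ card S"
      using assms by (intro mult_left_le power_le_one) auto
    also have "\<dots> \<le> q powr t"
    proof (cases "q = 0")
      case True
      moreover have "card S \<noteq> 0"
        using assms(3) that by linarith
      ultimately show ?thesis
        by (simp add: power_0_left)
    next
      case False
      then have "q ^ card S = q powr real (card S)"
        using assms by (simp add: powr_realpow)
      also have "\<dots> \<le> q powr t"
        using assms that False by (intro powr_mono') auto
      finally show ?thesis .
    qed
    finally show ?thesis .
  qed
  then have "binomial_tail K t q \<le> (\<Sum>S | S \<subseteq> {..<K} \<and> t < real (card S). q powr t)"
    unfolding binomial_tail_def by (intro sum_mono term_le) simp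
  then show ?thesis
    by simp
qed

lemma card_large_subsets_le:
  assumes "0 \<le> a" and "1 \<le> K"
  shows "card {S. S \<subseteq> {..<K} \<and> real K - a < real (card S)} \<le> (a + 1) * real K powr a"
proof -
  define m where "m = nat \<lfloor>a\<rfloor>"
  have "real m \<le> a"
    using assms by (simp add: m_def)
  have img: "(\<lambda>S. {..<K} - S) ` {S. S \<subseteq> {..<K} \<and> real K - a < real (card S)}
      \<subseteq> (\<Union>i\<le>m. {T. T \<subseteq> {..<K} \<and> card T = i})"
  proof clarify
    fix S assume S: "S \<subseteq> {..<K}" "real K - a < real (card S)"
    then have "card ({..<K} - S) \<le> m"
      using card_mono[of "{..<K}" S] by (simp add: card_Diff_subset finite_subset m_def) linarith
    then show "{..<K} - S \<in> (\<Union>i\<le>m. {T. T \<subseteq> {..<K} \<and> card T = i})" by auto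
  qed
  have "inj_on (\<lambda>S. {..<K} - S) {S. S \<subseteq> {..<K} \<and> real K - a < real (card S)}"
    by (rule inj_onI) auto
  then have "card {S. S \<subseteq> {..<K} \<and> real K - a < real (card S)}
      = card ((\<lambda>S. {..<K} - S) ` {S. S \<subseteq> {..<K} \<and> real K - a < real (card S)})"
    by (simp add: card_image)
  also have "\<dots> \<le> card (\<Union>i\<le>m. {T. T \<subseteq> {..<K} \<and> card T = i})"
    by (intro card_mono img) auto
  also have "\<dots> \<le> (\<Sum>i\<le>m. K choose i)"
    using card_UN_le[of "{..m}" "\<lambda>i. {T. T \<subseteq> {..<K} \<and> card T = i}"] by (simp add: n_subsets)
  also have "\<dots> \<le> (\<Sum>i\<le>m. K ^ m)"
  proof (intro sum_mono)
    fix i assume "i \<in> {..m}"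
    then have "K choose i \<le> K ^ i"
      by (cases "i \<le> K") (auto simp: binomial_le_pow binomial_eq_0)
    also have "\<dots> \<le> K ^ m"
      using assms \<open>i \<in> {..m}\<close> by (intro power_increasing) auto
    finally show "K choose i \<le> K ^ m" .
  qed
  also have "\<dots> = (m + 1) * K ^ m"
    by simp
  finally have "real (card {S. S \<subseteq> {..<K} \<and> real K - a < real (card S)}) \<le> real ((m + 1) * K ^ m)"
    by (rule of_nat_mono)
  also have "\<dots> = (real m + 1) * real K ^ m"
    by (simp add: algebra_simps)
  also have "\<dots> \<le> (a + 1) * real K powr a"
    using assms \<open>real m \<le> a\<close> by (intro mult_mono) (auto simp: powr_realpow[symmetric] intro: powr_mono)
  finally show ?thesis .
qed

lemma binomial_tail_sqrt_tendsto_0: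
  assumes "0 \<le> q" "q < 1" "0 < c"
  shows "(\<lambda>K. binomial_tail K (real K - c * sqrt (real K)) q) \<longlonglongrightarrow> 0"
proof -
  define b where "b K = (c * sqrt (real K) + 1) * real K powr (c * sqrt (real K))
    * q powr (real K - c * sqrt (real K))" for K :: nat
  have b_tendsto: "b \<longlonglongrightarrow> 0"
  proof (cases "q = 0")
    case False
    with assms have "0 < q"
      by simp
    with assms show ?thesis
      unfolding b_def by real_asymp
  next
    case True
    then have "b = (\<lambda>K. 0)"
      by (simp add: b_def fun_eq_iff)
    then show ?thesis
      by simp
  qed
  have "\<forall>\<^sub>F K in sequentially. c * sqrt (real K) \<le> real K"
    using assms(3) by real_asymp
  with eventually_ge_at_top[of 1]
  have upper: "\<forall>\<^sub>F K in sequentially. binomial_tail K (real K - c * sqrt (real K)) q \<le> b K"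
  proof eventually_elim
    case (elim K)
    then have "binomial_tail K (real K - c * sqrt (real K)) q \<le>
        card {S. S \<subseteq> {..<K} \<and> real K - c * sqrt (real K) < real (card S)}
        * q powr (real K - c * sqrt (real K))"
      using assms by (intro binomial_tail_le_powr) auto
    also have "\<dots> \<le> b K"
      unfolding b_def using assms elim by (intro mult_right_mono card_large_subsets_le) auto
    finally show ?case .
  qed
  have "\<forall>\<^sub>F K in sequentially. 0 \<le> binomial_tail K (real K - c * sqrt (real K)) q"
    using assms by (intro always_eventually allI binomial_tail_nonneg) auto
  from tendsto_sandwich[OF this upper tendsto_const b_tendsto] show ?thesis .
qed

lemma binomial_tail_sqrt_tendsto:
  assumes "0 \<le> q" "q \<le> 1" "0 < c"
  shows "(\<lambda>K. binomial_tail K (real K - c * sqrt (real K)) q) \<longlonglongrightarrow> (if q = 1 then 1 else 0)"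
proof (cases "q = 1")
  case True
  have "\<forall>\<^sub>F K in sequentially. real K - c * sqrt (real K) < real K"
    using assms(3) by real_asymp
  then have "\<forall>\<^sub>F K in sequentially. binomial_tail K (real K - c * sqrt (real K)) q = 1"
    unfolding True by (rule eventually_mono) (rule binomial_tail_one)
  with True show ?thesis
    by (simp add: tendsto_eventually)
next
  case False
  with assms show ?thesis
    by (simp add: binomial_tail_sqrt_tendsto_0)
qed

lemma card_add_le_card_Int:
  assumes "finite C" "A \<subseteq> C" "B \<subseteq> C"
  shows "card A + card B \<le> card C + card (A \<inter> B)"
proof -
  have "card A + card B = card (A \<union> B) + card (A \<inter> B)"
    using assms by (meson card_Un_Int finite_subset)
  also have "card (A \<union> B) \<le> card C"
    using assms by (intro card_mono) auto
  finally show ?thesis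
    by simp
qed

lemma (in prob_space) prob_Int_ge:
  assumes "A \<in> events" "B \<in> events"
  shows "prob A + prob B - 1 \<le> prob (A \<inter> B)"
  using measure_Un3[of A M B] prob_le_1[of "A \<union> B"] assms by (simp add: fmeasurable_eq_sets)

lemma iterated_Limsup_Liminf_tendsto_0:
  fixes m f :: "nat \<Rightarrow> nat \<Rightarrow> real"
  assumes nonneg: "\<And>K n. 0 \<le> m K n" and le: "\<And>K n. m K n \<le> f K n"
    and f: "\<And>K. (\<lambda>n. f K n) \<longlonglongrightarrow> b K" and b: "b \<longlonglongrightarrow> 0"
  shows "(\<lambda>K. limsup (\<lambda>n. ereal (m K n))) \<longlonglongrightarrow> 0"
    and "(\<lambda>K. liminf (\<lambda>n. ereal (m K n))) \<longlonglongrightarrow> 0"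
proof -
  have upper: "limsup (\<lambda>n. ereal (m K n)) \<le> ereal (b K)" for K
  proof -
    have "limsup (\<lambda>n. ereal (m K n)) \<le> limsup (\<lambda>n. ereal (f K n))"
      using le by (intro Limsup_mono) simp
    also have "\<dots> = ereal (b K)"
      using f by (intro lim_imp_Limsup) (auto intro: tendsto_ereal)
    finally show ?thesis .
  qed
  have lower: "0 \<le> liminf (\<lambda>n. ereal (m K n))" for K
    using nonneg by (intro Liminf_bounded) simp
  have inf_le_sup: "liminf (\<lambda>n. ereal (m K n)) \<le> limsup (\<lambda>n. ereal (m K n))" for K
    by (intro Liminf_le_Limsup) simp
  have sup_ge: "0 \<le> limsup (\<lambda>n. ereal (m K n))" for K
    using lower inf_le_sup by (rule order_trans)
  have inf_le: "liminf (\<lambda>n. ereal (m K n)) \<le> ereal (b K)" for K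
    using inf_le_sup upper by (rule order_trans)
  have b_ereal: "(\<lambda>K. ereal (b K)) \<longlonglongrightarrow> 0"
    using b by (simp add: zero_ereal_def tendsto_ereal)
  show "(\<lambda>K. limsup (\<lambda>n. ereal (m K n))) \<longlonglongrightarrow> 0"
    by (intro tendsto_sandwich[OF _ _ tendsto_const b_ereal] always_eventually allI sup_ge upper)
  show "(\<lambda>K. liminf (\<lambda>n. ereal (m K n))) \<longlonglongrightarrow> 0"
    by (intro tendsto_sandwich[OF _ _ tendsto_const b_ereal] always_eventually allI lower inf_le)
qed

locale random_forest =
  fixes Om :: "nat \<Rightarrow> 'o measure" and L :: "nat \<Rightarrow> nat \<Rightarrow> 'o \<Rightarrow> 'a \<Rightarrow> 'a set"
  assumes prob_space_Om: "prob_space (Om n)"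
    and leaf_self: "u \<in> L n k \<omega> u"
    and leaf_unique: "u \<in> L n k \<omega> v \<Longrightarrow> L n k \<omega> u = L n k \<omega> v"
    and leaf_event: "{\<omega> \<in> space (Om n). u \<in> L n k \<omega> v} \<in> sets (Om n)"
    and leaf_events_indep:
      "prob_space.indep_events (Om n) (\<lambda>k. {\<omega> \<in> space (Om n). u \<in> L n k \<omega> v}) UNIV"
    and leaf_prob_same: "measure (Om n) {\<omega> \<in> space (Om n). u \<in> L n k \<omega> v} =
                         measure (Om n) {\<omega> \<in> space (Om n). u \<in> L n k' \<omega> v}"
    and leaf_prob_convergent: "convergent (\<lambda>n. measure (Om n) {\<omega> \<in> space (Om n). u \<in> L n 0 \<omega> v})"
begin

definition leaf_prob :: "nat \<Rightarrow> 'a \<Rightarrow> 'a \<Rightarrow> real" where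
  "leaf_prob n u v = measure (Om n) {\<omega> \<in> space (Om n). u \<in> L n 0 \<omega> v}"

definition limit_leaf_prob :: "'a \<Rightarrow> 'a \<Rightarrow> real" where
  "limit_leaf_prob u v = lim (\<lambda>n. leaf_prob n u v)"

lemma leaf_prob_tendsto: "(\<lambda>n. leaf_prob n u v) \<longlonglongrightarrow> limit_leaf_prob u v"
  using leaf_prob_convergent unfolding leaf_prob_def limit_leaf_prob_def
  by (simp add: convergent_LIMSEQ_iff)

lemma leaf_prob_bounds: "0 \<le> leaf_prob n u v" "leaf_prob n u v \<le> 1"
  unfolding leaf_prob_def using prob_space.prob_le_1[OF prob_space_Om] by auto

lemma limit_leaf_prob_bounds: "0 \<le> limit_leaf_prob u v" "limit_leaf_prob u v \<le> 1"
proof -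
  show "0 \<le> limit_leaf_prob u v"
    using leaf_prob_bounds by (intro LIMSEQ_le_const[OF leaf_prob_tendsto]) auto
  show "limit_leaf_prob u v \<le> 1"
    using leaf_prob_bounds by (intro LIMSEQ_le_const2[OF leaf_prob_tendsto]) auto
qed

lemma limit_leaf_prob_self: "limit_leaf_prob u u = 1"
proof -
  have "leaf_prob n u u = 1" for n
    using leaf_self prob_space.prob_space[OF prob_space_Om] by (simp add: leaf_prob_def)
  then show ?thesis
    using leaf_prob_tendsto[of u u] by (simp add: LIMSEQ_const_iff)
qed

lemma
  shows count_leaf_hits_event:
    "{\<omega> \<in> space (Om n). t < real (card {k\<in>{..<K}. u \<in> L n k \<omega> v})} \<in> sets (Om n)"
  and prob_count_leaf_hits:
    "measure (Om n) {\<omega> \<in> space (Om n). t < real (card {k\<in>{..<K}. u \<in> L n k \<omega> v})}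
       = binomial_tail K t (leaf_prob n u v)"
proof -
  interpret prob_space "Om n"
    by (rule prob_space_Om)
  let ?A = "\<lambda>k. {\<omega> \<in> space (Om n). u \<in> L n k \<omega> v}"
  have eq: "{\<omega> \<in> space (Om n). t < real (card {k\<in>{..<K}. u \<in> L n k \<omega> v})}
      = {\<omega> \<in> space (Om n). t < real (card {k\<in>{..<K}. \<omega> \<in> ?A k})}"
    by auto
  show "{\<omega> \<in> space (Om n). t < real (card {k\<in>{..<K}. u \<in> L n k \<omega> v})} \<in> sets (Om n)"
    unfolding eq by (rule count_hits_in_events[OF leaf_event])
  show "measure (Om n) {\<omega> \<in> space (Om n). t < real (card {k\<in>{..<K}. u \<in> L n k \<omega> v})}
      = binomial_tail K t (leaf_prob n u v)"
    unfolding eq binomial_tail_def leaf_prob_def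
    by (rule prob_count_hits[OF leaf_event leaf_events_indep leaf_prob_same])
qed

lemma lili_event_tendsto:
  "(\<lambda>n. measure (Om n) (lili_event (Om n) (L n) K u v))
     \<longlonglongrightarrow> binomial_tail K (real K - sqrt (real K)) (limit_leaf_prob u v)"
  unfolding lili_event_def prob_count_leaf_hits by (intro tendsto_intros leaf_prob_tendsto)

lemma prob_I_eq: "prob_I Om L u v = (if limit_leaf_prob u v = 1 then 1 else 0)"
proof -
  have "prob_I Om L u v
      = lim (\<lambda>K. binomial_tail K (real K - 1 * sqrt (real K)) (limit_leaf_prob u v))"
    unfolding prob_I_def using limI[OF lili_event_tendsto] by simp
  also have "\<dots> = (if limit_leaf_prob u v = 1 then 1 else 0)"
    using limit_leaf_prob_bounds by (intro limI binomial_tail_sqrt_tendsto) auto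
  finally show ?thesis .
qed

lemma mem_leaf_iff: "u \<in> L n k \<omega> v \<Longrightarrow> w \<in> L n k \<omega> u \<longleftrightarrow> w \<in> L n k \<omega> v"
  by (simp add: leaf_unique)

lemma limit_leaf_prob_eq_1_transfer:
  assumes "limit_leaf_prob a b = 1" and "limit_leaf_prob c d = 1"
    and "\<And>n \<omega>. a \<in> L n 0 \<omega> b \<Longrightarrow> c \<in> L n 0 \<omega> d \<Longrightarrow> e \<in> L n 0 \<omega> f"
  shows "limit_leaf_prob e f = 1"
proof -
  have "leaf_prob n a b + leaf_prob n c d - 1 \<le> leaf_prob n e f" for n
  proof -
    interpret prob_space "Om n"
      by (rule prob_space_Om)
    have "leaf_prob n a b + leaf_prob n c d - 1
        \<le> prob ({\<omega> \<in> space (Om n). a \<in> L n 0 \<omega> b} \<inter> {\<omega> \<in> space (Om n). c \<in> L n 0 \<omega> d})"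
      unfolding leaf_prob_def by (intro prob_Int_ge leaf_event)
    also have "\<dots> \<le> leaf_prob n e f"
      unfolding leaf_prob_def using assms(3) by (intro finite_measure_mono leaf_event) auto
    finally show ?thesis .
  qed
  moreover have "(\<lambda>n. leaf_prob n a b + leaf_prob n c d - 1)
      \<longlonglongrightarrow> limit_leaf_prob a b + limit_leaf_prob c d - 1"
    by (intro tendsto_intros leaf_prob_tendsto)
  ultimately have "limit_leaf_prob a b + limit_leaf_prob c d - 1 \<le> limit_leaf_prob e f"
    using LIMSEQ_le[OF _ leaf_prob_tendsto[of e f]] by blast
  with assms(1,2) limit_leaf_prob_bounds(2)[of e f] show ?thesis
    by simp
qed

lemma prob_I_eq_1_iff_same_region:
  "prob_I Om L y x = 1 \<longleftrightarrow> (\<forall>w. prob_I Om L w x = 1 \<longleftrightarrow> prob_I Om L w y = 1)"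
proof
  assume "prob_I Om L y x = 1"
  then have yx: "limit_leaf_prob y x = 1"
    by (simp add: prob_I_eq split: if_splits)
  have "limit_leaf_prob w x = 1 \<longleftrightarrow> limit_leaf_prob w y = 1" for w
  proof
    assume "limit_leaf_prob w x = 1"
    from this yx show "limit_leaf_prob w y = 1"
      by (rule limit_leaf_prob_eq_1_transfer) (simp add: mem_leaf_iff)
  next
    assume "limit_leaf_prob w y = 1"
    from this yx show "limit_leaf_prob w x = 1"
      by (rule limit_leaf_prob_eq_1_transfer) (simp add: mem_leaf_iff)
  qed
  then show "\<forall>w. prob_I Om L w x = 1 \<longleftrightarrow> prob_I Om L w y = 1"
    by (simp add: prob_I_eq)
next
  assume "\<forall>w. prob_I Om L w x = 1 \<longleftrightarrow> prob_I Om L w y = 1"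
  then show "prob_I Om L y x = 1"
    by (simp add: prob_I_eq limit_leaf_prob_self)
qed

lemma lili_event_Int_subset:
  "lili_event (Om n) (L n) K w x \<inter> lili_event (Om n) (L n) K w y
     \<subseteq> {\<omega> \<in> space (Om n). real K - 2 * sqrt (real K) < real (card {k\<in>{..<K}. y \<in> L n k \<omega> x})}"
proof
  fix \<omega> assume "\<omega> \<in> lili_event (Om n) (L n) K w x \<inter> lili_event (Om n) (L n) K w y"
  then have \<omega>: "\<omega> \<in> space (Om n)"
    and wx: "real K - sqrt (real K) < real (card {k\<in>{..<K}. w \<in> L n k \<omega> x})"
    and wy: "real K - sqrt (real K) < real (card {k\<in>{..<K}. w \<in> L n k \<omega> y})"
    by (auto simp: lili_event_def)
  let ?A = "{k\<in>{..<K}. w \<in> L n k \<omega> x}" and ?B = "{k\<in>{..<K}. w \<in> L n k \<omega> y}"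
    and ?C = "{k\<in>{..<K}. y \<in> L n k \<omega> x}"
  have "?A \<inter> ?B \<subseteq> ?C"
  proof
    fix k assume "k \<in> ?A \<inter> ?B"
    then have k: "k < K" "w \<in> L n k \<omega> x" "w \<in> L n k \<omega> y"
      by auto
    have "y \<in> L n k \<omega> w"
      using mem_leaf_iff[OF k(3)] leaf_self by simp
    then show "k \<in> ?C"
      using mem_leaf_iff[OF k(2)] k(1) by simp
  qed
  have "card ?A + card ?B \<le> card {..<K} + card (?A \<inter> ?B)"
    by (intro card_add_le_card_Int) auto
  also have "card (?A \<inter> ?B) \<le> card ?C"
    using \<open>?A \<inter> ?B \<subseteq> ?C\<close> by (intro card_mono) auto
  finally have "card ?A + card ?B \<le> K + card ?C"
    by simp
  with wx wy have "real K - 2 * sqrt (real K) < real (card ?C)"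
    by linarith
  with \<omega> show "\<omega> \<in> {\<omega> \<in> space (Om n).
      real K - 2 * sqrt (real K) < real (card {k\<in>{..<K}. y \<in> L n k \<omega> x})}"
    by simp
qed

lemma prob_I_Int_eq_0:
  assumes "prob_I Om L y x < 1"
  shows "prob_I_inter_is Om L w x y 0"
proof -
  have "limit_leaf_prob y x < 1"
    using assms limit_leaf_prob_bounds(2)[of y x] by (auto simp: prob_I_eq split: if_splits)
  then have tail_tendsto_0:
    "(\<lambda>K. binomial_tail K (real K - 2 * sqrt (real K)) (limit_leaf_prob y x)) \<longlonglongrightarrow> 0"
    using limit_leaf_prob_bounds by (intro binomial_tail_sqrt_tendsto_0) auto
  have le_tail: "measure (Om n) (lili_event (Om n) (L n) K w x \<inter> lili_event (Om n) (L n) K w y)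
      \<le> binomial_tail K (real K - 2 * sqrt (real K)) (leaf_prob n y x)" for K n
  proof -
    interpret prob_space "Om n"
      by (rule prob_space_Om)
    show ?thesis
      unfolding prob_count_leaf_hits[symmetric]
      by (intro finite_measure_mono lili_event_Int_subset count_leaf_hits_event)
  qed
  have tail_tendsto: "(\<lambda>n. binomial_tail K (real K - 2 * sqrt (real K)) (leaf_prob n y x))
      \<longlonglongrightarrow> binomial_tail K (real K - 2 * sqrt (real K)) (limit_leaf_prob y x)" for K
    by (intro tendsto_binomial_tail leaf_prob_tendsto)
  show ?thesis
    unfolding prob_I_inter_is_def zero_ereal_def[symmetric]
    using iterated_Limsup_Liminf_tendsto_0[OF measure_nonneg le_tail tail_tendsto tail_tendsto_0] ..
qed

end

theorem mainTheorem7: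
  fixes Om :: "nat \<Rightarrow> 'o measure"
    and L :: "nat \<Rightarrow> nat \<Rightarrow> 'o \<Rightarrow> real^'d \<Rightarrow> (real^'d) set"
    and x y :: "real^'d"
  assumes prob: "\<And>n. prob_space (Om n)"
    and leaf_self: "\<And>n k om u. u \<in> L n k om u"
    and leaf_unique: "\<And>n k om u v. u \<in> L n k om v \<Longrightarrow> L n k om u = L n k om v"
    and meas: "\<And>n k u v. {om \<in> space (Om n). u \<in> L n k om v} \<in> sets (Om n)"
    and indep: "\<And>n u v. prob_space.indep_events (Om n)
                    (\<lambda>k. {om \<in> space (Om n). u \<in> L n k om v}) UNIV"
    and same: "\<And>n k k' u v. measure (Om n) {om \<in> space (Om n). u \<in> L n k om v}
                           = measure (Om n) {om \<in> space (Om n). u \<in> L n k' om v}"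
    and conv: "\<And>u v. convergent (\<lambda>n. measure (Om n) {om \<in> space (Om n). u \<in> L n 0 om v})"
    and xy: "x \<noteq> y"
  shows "(prob_I Om L y x < 1 \<longrightarrow> (\<forall>w. prob_I_inter_is Om L w x y 0)) \<and>
         (prob_I Om L y x = 1 \<longleftrightarrow> (\<forall>w. prob_I Om L w x = 1 \<longleftrightarrow> prob_I Om L w y = 1))"
proof -
  interpret random_forest Om L
    by (rule random_forest.intro) (fact prob leaf_self leaf_unique meas indep same conv)+
  show ?thesis
    using prob_I_Int_eq_0 prob_I_eq_1_iff_same_region by blast
qed

end
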